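(* Let $\kappa \le \mathfrak{c}$ be a cardinal with $\mathrm{cf}(\kappa) > \omega$, let $\mathcal{A}$ and $\mathcal{B}$ be almost disjoint families on $\omega$ of size $\kappa$, and let $h : \mathcal{A} \to \mathcal{B}$ be a bijection. If the sets $A = \{|x \cap y| : x, y \in \mathcal{A},\ x \neq y\}$ and $B = \{|x \cap y| : x, y \in \mathcal{B},\ x \neq y\}$ are almost oscillating, then there is $\mathcal{A}' \subseteq \mathcal{A}$ with $|\mathcal{A}'| = \kappa$ such that the restriction $h \restriction \mathcal{A}' : \mathcal{A}' \to h[\mathcal{A}']$ is of dense oscillation.
   Context: An almost disjoint (AD) family on $\omega$ is a family of infinite subsets of $\omega$ any two distinct members of which have finite intersection. Two sets $A, B \subseteq \omega$ are oscillating if for every two-element set $\{x, y\} \subseteq A$ and every two-element set $\{w, z\} \subseteq B$ we have $|y - x| \neq |z - w|$; they are almost oscillating if there is $n \in \omega$ such that $A \setminus n$ and $B \setminus n$ are oscillating. For AD families $\mathcal{C}, \mathcal{D}$ of size $\kappa$, a bijection $g : \mathcal{C} \to \mathcal{D}$ is of dense oscillation if for every $\mathcal{C}' \subseteq \mathcal{C}$ with $|\mathcal{C}'| = \kappa$ there are $x, y, z \in \mathcal{C}'$ such that $|(x \cap z) \setminus (x \cap y)| \neq |(g(x) \cap g(z)) \setminus (g(x) \cap g(y))|$. *)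

theory Defs
  imports Main "HOL-Library.Countable_Set"
begin

definition AD :: "nat set set \<Rightarrow> bool" where
  "AD F \<longleftrightarrow> (\<forall>x\<in>F. infinite x) \<and> (\<forall>x\<in>F. \<forall>y\<in>F. x \<noteq> y \<longrightarrow> finite (x \<inter> y))"

definition oscillating :: "nat set \<Rightarrow> nat set \<Rightarrow> bool" where
  "oscillating A B \<longleftrightarrow>
     (\<forall>x\<in>A. \<forall>y\<in>A. \<forall>w\<in>B. \<forall>z\<in>B. x \<noteq> y \<longrightarrow> w \<noteq> z \<longrightarrow>
        \<bar>int y - int x\<bar> \<noteq> \<bar>int z - int w\<bar>)"

definition almost_oscillating :: "nat set \<Rightarrow> nat set \<Rightarrow> bool" where
  "almost_oscillating A B \<longleftrightarrow> (\<exists>n::nat. oscillating (A - {..<n}) (B - {..<n}))"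

text \<open>cf(|X|) > omega: no countable subset of the cardinal (realised as the
  canonical cardinal well-order on X) is cofinal, i.e. every countable subset is
  strictly bounded.\<close>
definition cf_gt_omega :: "'a set \<Rightarrow> bool" where
  "cf_gt_omega X \<longleftrightarrow>
     (\<forall>S \<subseteq> X. countable S \<longrightarrow> (\<exists>a\<in>X. \<forall>s\<in>S. (s, a) \<in> card_of X \<and> s \<noteq> a))"

definition dense_oscillation :: "(nat set \<Rightarrow> nat set) \<Rightarrow> nat set set \<Rightarrow> nat set set \<Rightarrow> bool" where
  "dense_oscillation g C D \<longleftrightarrow> bij_betw g C D \<and>
     (\<forall>C' \<subseteq> C. (card_of C', card_of C) \<in> ordIso \<longrightarrow>
        (\<exists>x\<in>C'. \<exists>y\<in>C'. \<exists>z\<in>C'.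
           card ((x \<inter> z) - (x \<inter> y)) \<noteq> card ((g x \<inter> g z) - (g x \<inter> g y))))"

end

theory Submission
  imports Defs
begin

text \<open>In fact \<open>\<A>' = \<A>\<close> works. As \<open>cf \<kappa> > \<omega>\<close>, every \<open>\<C> \<subseteq> \<A>\<close> of size \<open>\<kappa>\<close> is
  uncountable; let \<open>n\<close> be such that the intersection sizes of \<open>\<A>\<close> and of \<open>\<B>\<close> oscillate
  above \<open>n\<close>. Counting finite sets of naturals, we may shrink \<open>\<C>\<close> so that any two of its
  members, and any two of their images under \<open>h\<close>, share \<open>n\<close> common points. Fix \<open>x \<in> \<C>\<close>
  and shrink again so that \<open>x \<inter> y = F\<close> and \<open>h x \<inter> h y = G\<close> for all remaining \<open>y\<close>.
  Uncountably many infinite sets cannot pairwise meet inside the finite set \<open>F\<close>, so there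
  are \<open>y \<noteq> z\<close> with \<open>y \<inter> z \<supset> F\<close>. For the triple \<open>(y, x, z)\<close> the two sides of dense
  oscillation are \<open>|y \<inter> z| - |F| > 0\<close> and \<open>|h y \<inter> h z| - |G|\<close>, differences of
  intersection sizes above \<open>n\<close>, which cannot coincide by oscillation.\<close>

definition intersection_sizes :: "nat set set \<Rightarrow> nat set" where
  "intersection_sizes \<F> = {card (x \<inter> y) | x y. x \<in> \<F> \<and> y \<in> \<F> \<and> x \<noteq> y}"

lemma AD_infinite: "AD \<F> \<Longrightarrow> x \<in> \<F> \<Longrightarrow> infinite x"
  unfolding AD_def by blast

lemma AD_finite_Int: "AD \<F> \<Longrightarrow> x \<in> \<F> \<Longrightarrow> y \<in> \<F> \<Longrightarrow> x \<noteq> y \<Longrightarrow> finite (x \<inter> y)"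
  unfolding AD_def by blast

lemma card_Int_in_intersection_sizes:
  assumes "AD \<F>" "x \<in> \<F>" "y \<in> \<F>" "x \<noteq> y" "S \<subseteq> x \<inter> y" "card S = n"
  shows "card (x \<inter> y) \<in> intersection_sizes \<F> - {..<n}"
proof -
  have "n \<le> card (x \<inter> y)"
    using card_mono[OF AD_finite_Int[OF assms(1-4)] assms(5)] assms(6) by simp
  then show ?thesis using assms(2-4) unfolding intersection_sizes_def by auto
qed

lemma oscillating_diff_neq:
  assumes "oscillating P Q" "p \<in> P" "q \<in> P" "r \<in> Q" "t \<in> Q" "p < q" "r \<le> t"
  shows "q - p \<noteq> t - r"
proof
  assume "q - p = t - r"
  then have "r \<noteq> t" and "\<bar>int q - int p\<bar> = \<bar>int t - int r\<bar>" using assms(6,7) by auto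
  then show False using assms(1-6) unfolding oscillating_def by force
qed

lemma card_Int_diff_neq_if_oscillating:
  fixes x y z x' y' z' :: "nat set"
  assumes "oscillating P Q"
    and "card (x \<inter> y) \<in> P" "card (y \<inter> z) \<in> P" "card (x' \<inter> y') \<in> Q" "card (y' \<inter> z') \<in> Q"
    and fin: "finite (y \<inter> z)" "finite (y' \<inter> z')"
    and sub: "x \<inter> y \<subseteq> z" "x' \<inter> y' \<subseteq> z'"
    and "\<not> y \<inter> z \<subseteq> x"
  shows "card (y \<inter> z - y \<inter> x) \<noteq> card (y' \<inter> z' - y' \<inter> x')"
proof -
  have psub: "y \<inter> x \<subset> y \<inter> z" and sub': "y' \<inter> x' \<subseteq> y' \<inter> z'"
    using sub \<open>\<not> y \<inter> z \<subseteq> x\<close> by auto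
  have lt: "card (x \<inter> y) < card (y \<inter> z)"
    using psubset_card_mono[OF fin(1) psub] by (simp add: Int_commute)
  have le: "card (x' \<inter> y') \<le> card (y' \<inter> z')"
    using card_mono[OF fin(2) sub'] by (simp add: Int_commute)
  have "card (y \<inter> z - y \<inter> x) = card (y \<inter> z) - card (x \<inter> y)"
    using card_Diff_subset[OF finite_subset[OF _ fin(1)]] psub
    by (metis Int_commute psubset_imp_subset)
  moreover have "card (y' \<inter> z' - y' \<inter> x') = card (y' \<inter> z') - card (x' \<inter> y')"
    using card_Diff_subset[OF finite_subset[OF _ fin(2)]] sub' by (metis Int_commute)
  ultimately show ?thesis using oscillating_diff_neq[OF assms(1-5) lt le] by simp
qed

lemma uncountable_fiber:
  assumes "uncountable C" "f ` C \<subseteq> V" "countable V"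
  shows "\<exists>v. uncountable {x \<in> C. f x = v}"
proof (rule ccontr)
  assume "\<not> ?thesis"
  then have "countable (\<Union>v\<in>f ` C. {x \<in> C. f x = v})"
    using countable_subset[OF assms(2,3)] by blast
  moreover have "C = (\<Union>v\<in>f ` C. {x \<in> C. f x = v})" by auto
  ultimately show False using assms(1) by simp
qed

lemma uncountable_subfamily_common_subset:
  fixes g :: "'a \<Rightarrow> nat set"
  assumes "uncountable C" "\<And>x. x \<in> C \<Longrightarrow> infinite (g x)"
  shows "\<exists>C' \<subseteq> C. uncountable C' \<and> (\<exists>S. card S = n \<and> (\<forall>x\<in>C'. S \<subseteq> g x))"
proof -
  have "\<forall>x\<in>C. \<exists>S. S \<subseteq> g x \<and> finite S \<and> card S = n"
  proof
    fix x assume "x \<in> C"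
    then show "\<exists>S. S \<subseteq> g x \<and> finite S \<and> card S = n"
      using infinite_arbitrarily_large[OF assms(2)] by blast
  qed
  then obtain S where S: "\<forall>x\<in>C. S x \<subseteq> g x \<and> finite (S x) \<and> card (S x) = n"
    by (rule bchoice[THEN exE])
  then have "S ` C \<subseteq> Collect finite" by blast
  then obtain v where fiber: "uncountable {x \<in> C. S x = v}"
    using uncountable_fiber[OF assms(1) _ countable_Collect_finite] by blast
  then have "{x \<in> C. S x = v} \<noteq> {}" by force
  then obtain x\<^sub>0 where "x\<^sub>0 \<in> C" "S x\<^sub>0 = v" by blast
  then have "card v = n" using S by blast
  moreover have "\<forall>x\<in>{x \<in> C. S x = v}. v \<subseteq> g x" using S by blast
  ultimately show ?thesis
    using fiber by (intro exI[of _ "{x \<in> C. S x = v}"] conjI exI[of _ v]) auto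
qed

lemma countable_if_pairwise_Int_subset:
  fixes D :: "nat set set"
  assumes "\<And>y. y \<in> D \<Longrightarrow> infinite y" "finite F"
    and "\<And>y z. y \<in> D \<Longrightarrow> z \<in> D \<Longrightarrow> y \<noteq> z \<Longrightarrow> y \<inter> z \<subseteq> F"
  shows "countable D"
proof (rule countableI)
  have least_mem: "(LEAST k. k \<in> y - F) \<in> y - F" if "y \<in> D" for y
    using Diff_infinite_finite[OF assms(2) assms(1)[OF that]]
    by (metis LeastI finite.emptyI ex_in_conv)
  show "inj_on (\<lambda>y. LEAST k. k \<in> y - F) D"
  proof (rule inj_onI, rule ccontr)
    fix y z assume yz: "y \<in> D" "z \<in> D" "y \<noteq> z"
      and "(LEAST k. k \<in> y - F) = (LEAST k. k \<in> z - F)"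
    then have "(LEAST k. k \<in> y - F) \<in> (y - F) \<inter> (z - F)"
      using least_mem[OF yz(1)] least_mem[OF yz(2)] by simp
    then show False using assms(3)[OF yz] by blast
  qed
qed

lemma exists_pair_with_common_traces:
  fixes C :: "nat set set" and h :: "nat set \<Rightarrow> nat set"
  assumes "uncountable C" "\<And>y. y \<in> C \<Longrightarrow> infinite y"
    and fin: "\<And>y. y \<in> C \<Longrightarrow> finite (x \<inter> y) \<and> finite (h x \<inter> h y)"
  shows "\<exists>y\<in>C. \<exists>z\<in>C. y \<noteq> z \<and> x \<inter> y \<subseteq> z \<and> h x \<inter> h y \<subseteq> h z \<and> \<not> y \<inter> z \<subseteq> x"
proof -
  have traces: "(\<lambda>y. (x \<inter> y, h x \<inter> h y)) ` C \<subseteq> Collect finite \<times> Collect finite"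
    using fin by blast
  have "countable (Collect finite \<times> Collect finite :: (nat set \<times> nat set) set)"
    using countable_Collect_finite by blast
  then obtain v where fiber: "uncountable {y \<in> C. (x \<inter> y, h x \<inter> h y) = v}"
    using uncountable_fiber[OF assms(1) traces] by blast
  obtain F G where "v = (F, G)" by fastforce
  define D where "D = {y \<in> C. x \<inter> y = F \<and> h x \<inter> h y = G}"
  have "uncountable D" using fiber \<open>v = (F, G)\<close> unfolding D_def by simp
  have D: "y \<in> C" "x \<inter> y = F" "h x \<inter> h y = G" if "y \<in> D" for y
    using that unfolding D_def by auto
  have "D \<noteq> {}" using \<open>uncountable D\<close> by force
  then obtain y\<^sub>0 where "y\<^sub>0 \<in> D" by blast
  then have "finite F" using fin D by blast
  moreover have "infinite y" if "y \<in> D" for y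
    using assms(2) D(1) that by blast
  ultimately obtain y z where yz: "y \<in> D" "z \<in> D" "y \<noteq> z" "\<not> y \<inter> z \<subseteq> F"
    using countable_if_pairwise_Int_subset[of D F] \<open>uncountable D\<close> by blast
  then have "x \<inter> y \<subseteq> z" "h x \<inter> h y \<subseteq> h z" "\<not> y \<inter> z \<subseteq> x"
    using D(2,3)[OF yz(1)] D(2,3)[OF yz(2)] by blast+
  then show ?thesis using D(1) yz(1-3) by blast
qed

lemma uncountable_subfamily_large_intersections:
  assumes AD: "AD \<A>" "AD (h ` \<A>)" and "inj_on h \<A>" and "\<C> \<subseteq> \<A>" "uncountable \<C>"
  obtains \<C>\<^sub>1 where "\<C>\<^sub>1 \<subseteq> \<C>" "uncountable \<C>\<^sub>1"
    and "\<And>x y. x \<in> \<C>\<^sub>1 \<Longrightarrow> y \<in> \<C>\<^sub>1 \<Longrightarrow> x \<noteq> y \<Longrightarrow>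
      card (x \<inter> y) \<in> intersection_sizes \<A> - {..<n} \<and>
      card (h x \<inter> h y) \<in> intersection_sizes (h ` \<A>) - {..<n}"
proof -
  have "infinite x" if "x \<in> \<C>" for x
    using AD_infinite[OF AD(1)] \<open>\<C> \<subseteq> \<A>\<close> that by blast
  then obtain \<C>\<^sub>0 S where \<C>\<^sub>0: "\<C>\<^sub>0 \<subseteq> \<C>" "uncountable \<C>\<^sub>0" and S: "card S = n" "\<forall>x\<in>\<C>\<^sub>0. S \<subseteq> x"
    using uncountable_subfamily_common_subset[of \<C> "\<lambda>x. x" n, OF \<open>uncountable \<C>\<close>] by blast
  have "infinite (h x)" if "x \<in> \<C>\<^sub>0" for x
    using AD_infinite[OF AD(2) imageI] \<C>\<^sub>0(1) \<open>\<C> \<subseteq> \<A>\<close> that by blast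
  then obtain \<C>\<^sub>1 T where \<C>\<^sub>1: "\<C>\<^sub>1 \<subseteq> \<C>\<^sub>0" "uncountable \<C>\<^sub>1" and T: "card T = n" "\<forall>x\<in>\<C>\<^sub>1. T \<subseteq> h x"
    using uncountable_subfamily_common_subset[of \<C>\<^sub>0 h n, OF \<C>\<^sub>0(2)] by blast
  show ?thesis
  proof (rule that)
    show "\<C>\<^sub>1 \<subseteq> \<C>" "uncountable \<C>\<^sub>1" using \<C>\<^sub>0(1) \<C>\<^sub>1 by auto
    fix x y assume xy: "x \<in> \<C>\<^sub>1" "y \<in> \<C>\<^sub>1" "x \<noteq> y"
    then have "x \<in> \<A>" "y \<in> \<A>" using \<C>\<^sub>0(1) \<C>\<^sub>1(1) \<open>\<C> \<subseteq> \<A>\<close> by auto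
    moreover have "S \<subseteq> x \<inter> y" "T \<subseteq> h x \<inter> h y" using S(2) T(2) \<C>\<^sub>1(1) xy by blast+
    ultimately show "card (x \<inter> y) \<in> intersection_sizes \<A> - {..<n} \<and>
      card (h x \<inter> h y) \<in> intersection_sizes (h ` \<A>) - {..<n}"
      using card_Int_in_intersection_sizes[OF AD(1) _ _ \<open>x \<noteq> y\<close> _ S(1)]
        card_Int_in_intersection_sizes[OF AD(2) imageI imageI _ _ T(1)]
        inj_onD[OF \<open>inj_on h \<A>\<close>] \<open>x \<noteq> y\<close>
      by metis
  qed
qed

lemma exists_triple_card_diff_neq:
  assumes AD: "AD \<A>" "AD (h ` \<A>)" and "inj_on h \<A>"
    and osc: "oscillating (intersection_sizes \<A> - {..<n}) (intersection_sizes (h ` \<A>) - {..<n})"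
    and "\<C> \<subseteq> \<A>" "uncountable \<C>"
  shows "\<exists>x\<in>\<C>. \<exists>y\<in>\<C>. \<exists>z\<in>\<C>. card (x \<inter> z - x \<inter> y) \<noteq> card (h x \<inter> h z - h x \<inter> h y)"
proof -
  obtain \<C>\<^sub>1 where \<C>\<^sub>1: "\<C>\<^sub>1 \<subseteq> \<C>" "uncountable \<C>\<^sub>1"
    and sizes: "\<And>x y. x \<in> \<C>\<^sub>1 \<Longrightarrow> y \<in> \<C>\<^sub>1 \<Longrightarrow> x \<noteq> y \<Longrightarrow>
      card (x \<inter> y) \<in> intersection_sizes \<A> - {..<n} \<and>
      card (h x \<inter> h y) \<in> intersection_sizes (h ` \<A>) - {..<n}"
    using uncountable_subfamily_large_intersections[OF AD \<open>inj_on h \<A>\<close> \<open>\<C> \<subseteq> \<A>\<close> \<open>uncountable \<C>\<close>]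
    by blast
  have inf: "infinite x" if "x \<in> \<C>\<^sub>1" for x
    using AD_infinite[OF AD(1)] \<C>\<^sub>1(1) \<open>\<C> \<subseteq> \<A>\<close> that by blast
  have fin: "finite (x \<inter> y)" "finite (h x \<inter> h y)" if "x \<in> \<C>\<^sub>1" "y \<in> \<C>\<^sub>1" "x \<noteq> y" for x y
  proof -
    have "x \<in> \<A>" "y \<in> \<A>" using that \<C>\<^sub>1(1) \<open>\<C> \<subseteq> \<A>\<close> by auto
    moreover have "h x \<noteq> h y" using inj_onD[OF \<open>inj_on h \<A>\<close>] calculation that(3) by blast
    ultimately show "finite (x \<inter> y)" "finite (h x \<inter> h y)"
      using AD_finite_Int[OF AD(1) _ _ that(3)] AD_finite_Int[OF AD(2)] by auto
  qed
  have "\<C>\<^sub>1 \<noteq> {}" using \<C>\<^sub>1(2) by force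
  then obtain x where x: "x \<in> \<C>\<^sub>1" by blast
  have "uncountable (\<C>\<^sub>1 - {x})" using \<C>\<^sub>1(2) by simp
  moreover have "infinite y" "finite (x \<inter> y) \<and> finite (h x \<inter> h y)" if "y \<in> \<C>\<^sub>1 - {x}" for y
    using inf fin[of x y] x that by auto
  ultimately obtain y z where "y \<in> \<C>\<^sub>1 - {x}" "z \<in> \<C>\<^sub>1 - {x}" "y \<noteq> z"
    and traces: "x \<inter> y \<subseteq> z" "h x \<inter> h y \<subseteq> h z" and "\<not> y \<inter> z \<subseteq> x"
    using exists_pair_with_common_traces[of "\<C>\<^sub>1 - {x}" x h] by meson
  then have y: "y \<in> \<C>\<^sub>1" "x \<noteq> y" and z: "z \<in> \<C>\<^sub>1" by auto
  have "card (y \<inter> z - y \<inter> x) \<noteq> card (h y \<inter> h z - h y \<inter> h x)"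
    using card_Int_diff_neq_if_oscillating[OF osc
        conjunct1[OF sizes[OF x y]] conjunct1[OF sizes[OF y(1) z \<open>y \<noteq> z\<close>]]
        conjunct2[OF sizes[OF x y]] conjunct2[OF sizes[OF y(1) z \<open>y \<noteq> z\<close>]]
        fin[OF y(1) z \<open>y \<noteq> z\<close>] traces \<open>\<not> y \<inter> z \<subseteq> x\<close>] .
  then show ?thesis using x y z \<C>\<^sub>1(1) by blast
qed

lemma uncountable_if_cf_gt_omega:
  assumes "cf_gt_omega X"
  shows "uncountable X"
  using assms unfolding cf_gt_omega_def by blast

theorem corollary11:
  fixes \<A> \<B> :: "nat set set" and h :: "nat set \<Rightarrow> nat set"
  assumes "cf_gt_omega \<A>"
    and "AD \<A>" and "AD \<B>"
    and "(card_of \<A>, card_of \<B>) \<in> ordIso"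
    and "bij_betw h \<A> \<B>"
    and "almost_oscillating {card (x \<inter> y) | x y. x \<in> \<A> \<and> y \<in> \<A> \<and> x \<noteq> y}
                            {card (x \<inter> y) | x y. x \<in> \<B> \<and> y \<in> \<B> \<and> x \<noteq> y}"
  shows "\<exists>\<A>' \<subseteq> \<A>. (card_of \<A>', card_of \<A>) \<in> ordIso \<and> dense_oscillation h \<A>' (h ` \<A>')"
proof (intro exI[of _ \<A>] conjI subset_refl)
  show "(card_of \<A>, card_of \<A>) \<in> ordIso" by (rule ordIso_refl[OF card_of_Card_order])
  have "h ` \<A> = \<B>" "inj_on h \<A>" using assms(5) unfolding bij_betw_def by auto
  then obtain n where
    osc: "oscillating (intersection_sizes \<A> - {..<n}) (intersection_sizes (h ` \<A>) - {..<n})"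
    using assms(6) unfolding almost_oscillating_def intersection_sizes_def by blast
  show "dense_oscillation h \<A> (h ` \<A>)"
    unfolding dense_oscillation_def
  proof (intro conjI allI impI)
    show "bij_betw h \<A> (h ` \<A>)" using \<open>inj_on h \<A>\<close> by (rule inj_on_imp_bij_betw)
    fix \<C> assume "\<C> \<subseteq> \<A>" "(card_of \<C>, card_of \<A>) \<in> ordIso"
    then obtain f where "bij_betw f \<C> \<A>" using card_of_ordIso by blast
    then have "uncountable \<C>" using uncountable_if_cf_gt_omega[OF assms(1)] by simp
    then show "\<exists>x\<in>\<C>. \<exists>y\<in>\<C>. \<exists>z\<in>\<C>. card (x \<inter> z - x \<inter> y) \<noteq> card (h x \<inter> h z - h x \<inter> h y)"
      using exists_triple_card_diff_neq[OF assms(2) _ \<open>inj_on h \<A>\<close> osc \<open>\<C> \<subseteq> \<A>\<close>]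
        assms(3) \<open>h ` \<A> = \<B>\<close> by blast
  qed
qed

end
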